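(* There is an absolute constant $d$ such that the following holds. Let $N=A+B>0$ with integers $A\ge B\ge0$. Let $X\in\{0,1\}^N$ be chosen uniformly at random among all strings with exactly $A$ ones and $B$ zeros. Let $M$ be the (1-indexed) position of the $(\lfloor N/2\rfloor+1)$-st one in $X$ if $A>B$, and $M=N$ if $A=B$. Then for every $r\ge1$, $$\Pr_X\left[\,\left|M-\frac{N^2}{2A}\right|>d\sqrt{rN}\,\right]\le 2^{-r}.$$ *)

theory Defs
  imports "HOL-Probability.Probability"
begin

definition strings :: "nat \<Rightarrow> nat \<Rightarrow> bool list set" where
  "strings A B = {xs. length xs = A + B \<and> length (filter id xs) = A}"

definition one_positions :: "bool list \<Rightarrow> nat list" where
  "one_positions xs = map Suc (filter (\<lambda>i. xs ! i) [0..<length xs])"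

definition Mpos :: "nat \<Rightarrow> nat \<Rightarrow> bool list \<Rightarrow> nat" where
  "Mpos A B xs = (if A > B then one_positions xs ! ((A + B) div 2) else A + B)"

end

theory Submission
  imports Defs
begin

text \<open>
  Identify a string with the set T of its one-positions, a uniformly random A-subset of the
  N = A + B positions. Then M \<le> m holds iff more than N div 2 of the first m positions carry a
  one, and the number of such ones is hypergeometric with mean m A / N, which is N / 2 exactly
  at m = N^2 / (2 A). So M deviates from N^2 / (2 A) by t only if the number of ones in a
  suitable prefix deviates from its mean by about t / 2. A Chernoff bound makes this
  exponentially unlikely: the exponential moment of a hypergeometric count is dominated by the
  binomial one, because T contains a fixed set J with probability at most (A / N)^|J|.
  Finally t = 16 sqrt (r N) gives probability at most 2 exp (-4 r) \<le> 2^(-r).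
\<close>

definition k_subsets :: "'a set \<Rightarrow> nat \<Rightarrow> 'a set set" where
  "k_subsets U k = {T. T \<subseteq> U \<and> card T = k}"

lemma finite_k_subsets: "finite U \<Longrightarrow> finite (k_subsets U k)"
  unfolding k_subsets_def by (rule finite_subset[of _ "Pow U"]) auto

lemma card_k_subsets: "finite U \<Longrightarrow> card (k_subsets U k) = card U choose k"
  unfolding k_subsets_def by (rule n_subsets)

lemma card_k_subsets_superset:
  assumes U: "finite U" and J: "J \<subseteq> U" "card J \<le> k"
  shows "card {T \<in> k_subsets U k. J \<subseteq> T} = (card U - card J) choose (k - card J)"
proof -
  have fJ: "finite J" using J U finite_subset by blast
  have "bij_betw (\<lambda>T. T - J) {T \<in> k_subsets U k. J \<subseteq> T} (k_subsets (U - J) (k - card J))"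
  proof (rule bij_betw_byWitness[where f' = "\<lambda>V. V \<union> J"])
    show "(\<lambda>T. T - J) ` {T \<in> k_subsets U k. J \<subseteq> T} \<subseteq> k_subsets (U - J) (k - card J)"
      using fJ by (auto simp: k_subsets_def card_Diff_subset)
    show "(\<lambda>V. V \<union> J) ` k_subsets (U - J) (k - card J) \<subseteq> {T \<in> k_subsets U k. J \<subseteq> T}"
    proof safe
      fix V assume V: "V \<in> k_subsets (U - J) (k - card J)"
      then have "card (V \<union> J) = card V + card J"
        using U fJ by (intro card_Un_disjoint) (auto simp: k_subsets_def intro: finite_subset)
      then show "V \<union> J \<in> k_subsets U k" using V J by (auto simp: k_subsets_def)
    qed
  qed (auto simp: k_subsets_def)
  then have "card {T \<in> k_subsets U k. J \<subseteq> T} = card (U - J) choose (k - card J)"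
    using U by (simp add: bij_betw_same_card card_k_subsets)
  then show ?thesis using J fJ by (simp add: card_Diff_subset)
qed

lemma binomial_diff_mult_power_le:
  assumes "j \<le> k" "k \<le> n"
  shows "real ((n - j) choose (k - j)) * real n ^ j \<le> real (n choose k) * real k ^ j"
  using assms
proof (induction j)
  case 0
  then show ?case by simp
next
  case (Suc j)
  obtain a b where a: "k - j = Suc a" and b: "n - j = Suc b"
    using Suc.prems by (metis Suc_diff_le diff_Suc_Suc le_trans)
  have step: "real ((n - Suc j) choose (k - Suc j)) * real (n - j)
      = real ((n - j) choose (k - j)) * real (k - j)"
  proof -
    have "Suc a * (Suc b choose Suc a) = Suc b * (b choose a)" by (rule Suc_times_binomial)
    moreover have "n - Suc j = b" "k - Suc j = a" using a b by auto
    ultimately show ?thesis using a b by (metis of_nat_mult mult.commute)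
  qed
  have ratio: "real (k - j) * real n \<le> real k * real (n - j)"
    using Suc.prems by (simp add: algebra_simps mult_left_mono)
  have "real ((n - Suc j) choose (k - Suc j)) * real n ^ Suc j * real (n - j)
      = real ((n - j) choose (k - j)) * real n ^ j * (real (k - j) * real n)"
    using step by (simp add: algebra_simps)
  also have "\<dots> \<le> real ((n - j) choose (k - j)) * real n ^ j * (real k * real (n - j))"
    by (intro mult_left_mono ratio) auto
  also have "\<dots> \<le> real (n choose k) * real k ^ j * (real k * real (n - j))"
    using Suc by (intro mult_right_mono) auto
  also have "\<dots> = real (n choose k) * real k ^ Suc j * real (n - j)" by simp
  finally show ?case using Suc.prems by simp
qed

lemma card_k_subsets_superset_le:
  assumes U: "finite U" and J: "J \<subseteq> U" and k: "k \<le> card U"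
  shows "real (card {T \<in> k_subsets U k. J \<subseteq> T})
    \<le> real (card (k_subsets U k)) * (real k / real (card U)) ^ card J"
proof (cases "card J \<le> k")
  case True
  have "card J \<le> card U" using U J by (rule card_mono)
  have le: "real (card {T \<in> k_subsets U k. J \<subseteq> T}) * real (card U) ^ card J
      \<le> real (card (k_subsets U k)) * real k ^ card J"
    using card_k_subsets_superset[OF U J True] binomial_diff_mult_power_le[OF True k]
    by (simp add: card_k_subsets U)
  show ?thesis
  proof (cases "card U = 0")
    case False
    then show ?thesis using le by (simp add: power_divide pos_le_divide_eq)
  next
    case True
    then have "J = {}" using \<open>card J \<le> card U\<close> J U by (auto intro: finite_subset)
    then show ?thesis by simp
  qed
next
  case False
  have "{T \<in> k_subsets U k. J \<subseteq> T} = {}"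
  proof safe
    fix T assume T: "T \<in> k_subsets U k" "J \<subseteq> T"
    then have "card J \<le> card T"
      using U by (intro card_mono) (auto simp: k_subsets_def intro: finite_subset)
    then show "T \<in> {}" using False T by (simp add: k_subsets_def)
  qed
  then show ?thesis by (simp only: card.empty of_nat_0) simp
qed

lemma power_card_eq_sum_Pow:
  fixes c :: "'a::comm_semiring_1"
  assumes "finite X"
  shows "(1 + c) ^ card X = (\<Sum>J\<in>Pow X. c ^ card J)"
  using prod_add[OF assms, of "\<lambda>_. c" "\<lambda>_. 1"] by (simp add: add.commute)

lemma sum_k_subsets_power_card_Int_le:
  fixes c :: real
  assumes c: "0 \<le> c" and U: "finite U" and I: "I \<subseteq> U" and k: "k \<le> card U"
  shows "(\<Sum>T\<in>k_subsets U k. (1 + c) ^ card (T \<inter> I))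
    \<le> real (card (k_subsets U k)) * (1 + c * (real k / real (card U))) ^ card I"
proof -
  let ?S = "k_subsets U k"
  define p where "p = real k / real (card U)"
  have fI: "finite I" using I U finite_subset by blast
  have "(\<Sum>T\<in>?S. (1 + c) ^ card (T \<inter> I)) = (\<Sum>T\<in>?S. \<Sum>J\<in>Pow I. if J \<subseteq> T then c ^ card J else 0)"
  proof (rule sum.cong[OF refl])
    fix T
    have "(1 + c) ^ card (T \<inter> I) = (\<Sum>J\<in>Pow (T \<inter> I). c ^ card J)"
      using fI by (intro power_card_eq_sum_Pow) auto
    also have "Pow (T \<inter> I) = {J \<in> Pow I. J \<subseteq> T}" by auto
    also have "(\<Sum>J\<in>{J \<in> Pow I. J \<subseteq> T}. c ^ card J) = (\<Sum>J\<in>Pow I. if J \<subseteq> T then c ^ card J else 0)"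
      using fI by (intro sum.inter_filter) auto
    finally show "(1 + c) ^ card (T \<inter> I) = (\<Sum>J\<in>Pow I. if J \<subseteq> T then c ^ card J else 0)" .
  qed
  also have "\<dots> = (\<Sum>J\<in>Pow I. \<Sum>T\<in>?S. if J \<subseteq> T then c ^ card J else 0)"
    by (rule sum.swap)
  also have "\<dots> = (\<Sum>J\<in>Pow I. c ^ card J * real (card {T \<in> ?S. J \<subseteq> T}))"
    using finite_k_subsets[OF U] by (simp add: sum.inter_filter[symmetric] mult.commute)
  also have "\<dots> \<le> (\<Sum>J\<in>Pow I. c ^ card J * (real (card ?S) * p ^ card J))"
    using I c unfolding p_def by (intro sum_mono mult_left_mono card_k_subsets_superset_le[OF U _ k]) auto
  also have "\<dots> = real (card ?S) * (\<Sum>J\<in>Pow I. (c * p) ^ card J)"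
    unfolding sum_distrib_left by (intro sum.cong refl) (simp add: power_mult_distrib)
  also have "\<dots> = real (card ?S) * (1 + c * p) ^ card I"
    by (simp only: power_card_eq_sum_Pow[OF fI])
  finally show ?thesis unfolding p_def .
qed

lemma card_k_subsets_exp_moment:
  fixes l x :: real
  assumes U: "finite U" and I: "I \<subseteq> U" and k: "k \<le> card U" and l: "0 \<le> l"
  shows "real (card {T \<in> k_subsets U k. x \<le> real (card (T \<inter> I))}) * exp (l * x)
    \<le> real (card (k_subsets U k)) * exp ((exp l - 1) * (real (card I) * (real k / real (card U))))"
proof -
  define c where "c = exp l - 1"
  define p where "p = real k / real (card U)"
  let ?K = "k_subsets U k"
  let ?E = "{T \<in> ?K. x \<le> real (card (T \<inter> I))}"
  have c: "0 \<le> c" using l by (simp add: c_def)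
  have "real (card ?E) * exp (l * x) = (\<Sum>T\<in>?E. exp (l * x))" by simp
  also have "\<dots> \<le> (\<Sum>T\<in>?E. (1 + c) ^ card (T \<inter> I))"
  proof (rule sum_mono)
    fix T assume "T \<in> ?E"
    then have "exp (l * x) \<le> exp (l * real (card (T \<inter> I)))"
      using l by (auto intro: mult_left_mono)
    also have "\<dots> = (1 + c) ^ card (T \<inter> I)"
      by (simp add: c_def exp_of_nat_mult[symmetric] mult.commute)
    finally show "exp (l * x) \<le> (1 + c) ^ card (T \<inter> I)" .
  qed
  also have "\<dots> \<le> (\<Sum>T\<in>?K. (1 + c) ^ card (T \<inter> I))"
    using finite_k_subsets[OF U] c by (intro sum_mono2) auto
  also have "\<dots> \<le> real (card ?K) * (1 + c * p) ^ card I"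
    unfolding p_def by (rule sum_k_subsets_power_card_Int_le[OF c U I k])
  also have "\<dots> \<le> real (card ?K) * exp (c * p * real (card I))"
  proof (rule mult_left_mono)
    have "(1 + c * p) ^ card I \<le> exp (c * p) ^ card I"
      using c by (intro power_mono) (auto simp: p_def exp_ge_add_one_self add.commute)
    then show "(1 + c * p) ^ card I \<le> exp (c * p * real (card I))"
      by (simp add: exp_of_nat_mult[symmetric] mult.commute)
  qed simp
  finally show ?thesis by (simp add: c_def p_def mult_ac)
qed

text \<open>The Chernoff parameter s / (2 n) minimises the bound l^2 n - l s obtained from
  exp l \<le> 1 + l + l^2.\<close>

lemma chernoff_exponent_le:
  fixes n q s :: real
  assumes q: "0 \<le> q" "q \<le> n" and s: "0 \<le> s" "s \<le> n"
  shows "(exp (s / (2 * n)) - 1) * q - s / (2 * n) * (q + s) \<le> - s\<^sup>2 / (4 * n)"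
proof -
  define l where "l = s / (2 * n)"
  have l: "0 \<le> l" "l \<le> 1" using s by (cases "n = 0"; simp add: l_def field_simps)+
  have "exp l - 1 \<le> l + l\<^sup>2" using exp_bound[OF l] by simp
  then have "(exp l - 1) * q \<le> (l + l\<^sup>2) * q" using q by (intro mult_right_mono) auto
  then have "(exp l - 1) * q - l * (q + s) \<le> l\<^sup>2 * q - l * s" by (simp add: algebra_simps)
  also have "\<dots> \<le> l\<^sup>2 * n - l * s" using q by (simp add: mult_left_mono)
  also have "\<dots> = - s\<^sup>2 / (4 * n)"
    by (cases "n = 0") (simp_all add: l_def power2_eq_square field_simps)
  finally show ?thesis by (simp add: l_def)
qed

lemma card_k_subsets_upper_tail:
  fixes s :: real
  assumes U: "finite U" and I: "I \<subseteq> U" and k: "k \<le> card U" and s: "0 \<le> s"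
  shows "real (card {T \<in> k_subsets U k. real (card I) * (real k / real (card U)) + s \<le> real (card (T \<inter> I))})
    \<le> real (card (k_subsets U k)) * exp (- s\<^sup>2 / (4 * real (card U)))"
proof -
  define n where "n = real (card U)"
  define q where "q = real (card I) * (real k / n)"
  define l where "l = s / (2 * n)"
  let ?K = "k_subsets U k"
  let ?E = "{T \<in> ?K. q + s \<le> real (card (T \<inter> I))}"
  have "real k / n \<le> 1" using k by (auto simp: n_def divide_le_eq_1)
  moreover have "real (card I) \<le> n" using card_mono[OF U I] by (simp add: n_def)
  ultimately have q: "0 \<le> q" "q \<le> n"
    using mult_mono[of "real (card I)" n "real k / n" 1] by (simp_all add: q_def n_def)
  show ?thesis
  proof (cases "n < s")
    case True
    have "?E = {}"
    proof safe
      fix T assume T: "T \<in> ?K" "q + s \<le> real (card (T \<inter> I))"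
      have "card (T \<inter> I) \<le> card U" using U I by (intro card_mono) auto
      then show "T \<in> {}" using T True q by (simp add: n_def)
    qed
    then show ?thesis unfolding q_def n_def by (simp only: card.empty of_nat_0) simp
  next
    case False
    have "0 \<le> l" using s by (simp add: l_def n_def)
    then have moment: "real (card ?E) * exp (l * (q + s)) \<le> real (card ?K) * exp ((exp l - 1) * q)"
      unfolding q_def n_def by (rule card_k_subsets_exp_moment[OF U I k])
    have exponent: "(exp l - 1) * q - l * (q + s) \<le> - s\<^sup>2 / (4 * n)"
      unfolding l_def using q s False by (intro chernoff_exponent_le) auto
    from moment have "real (card ?E) \<le> real (card ?K) * exp ((exp l - 1) * q - l * (q + s))"
      by (simp add: exp_diff pos_le_divide_eq)
    also have "\<dots> \<le> real (card ?K) * exp (- s\<^sup>2 / (4 * n))"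
      using exponent by (intro mult_left_mono) auto
    finally show ?thesis by (simp add: q_def n_def)
  qed
qed

lemma card_k_subsets_lower_tail:
  fixes s :: real
  assumes U: "finite U" and I: "I \<subseteq> U" and k: "k \<le> card U" and s: "0 \<le> s"
  shows "real (card {T \<in> k_subsets U k. real (card (T \<inter> I)) \<le> real (card I) * (real k / real (card U)) - s})
    \<le> real (card (k_subsets U k)) * exp (- s\<^sup>2 / (4 * real (card U)))"
proof -
  let ?E = "{T \<in> k_subsets U k. real (card (T \<inter> I)) \<le> real (card I) * (real k / real (card U)) - s}"
  let ?E' = "{T \<in> k_subsets U (card U - k).
    real (card I) * (real (card U - k) / real (card U)) + s \<le> real (card (T \<inter> I))}"
  have fI: "finite I" using I U finite_subset by blast
  have complement: "real (card I) * (real (card U - k) / real (card U))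
      = real (card I) - real (card I) * (real k / real (card U))"
    using card_mono[OF U I] k by (cases "card U = 0") (auto simp: of_nat_diff field_simps)
  have "(\<lambda>T. U - T) ` ?E \<subseteq> ?E'"
  proof safe
    fix T assume T: "T \<in> k_subsets U k"
      "real (card (T \<inter> I)) \<le> real (card I) * (real k / real (card U)) - s"
    have "T \<subseteq> U" "card T = k" using T(1) by (auto simp: k_subsets_def)
    moreover have "finite T" using \<open>T \<subseteq> U\<close> U by (rule finite_subset)
    ultimately show "U - T \<in> k_subsets U (card U - k)"
      by (auto simp: k_subsets_def card_Diff_subset)
    have "(U - T) \<inter> I = I - T \<inter> I" using I by auto
    then have "real (card ((U - T) \<inter> I)) = real (card I) - real (card (T \<inter> I))"
      using fI by (simp add: card_Diff_subset card_mono of_nat_diff)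
    then show "real (card I) * (real (card U - k) / real (card U)) + s \<le> real (card ((U - T) \<inter> I))"
      using T(2) complement by linarith
  qed
  moreover have "inj_on (\<lambda>T. U - T) ?E" by (rule inj_onI) (auto simp: k_subsets_def)
  ultimately have "card ?E \<le> card ?E'"
    using finite_k_subsets[OF U] by (intro card_inj_on_le) auto
  then have "real (card ?E) \<le> real (card ?E')" by simp
  also have "\<dots> \<le> real (card (k_subsets U (card U - k))) * exp (- s\<^sup>2 / (4 * real (card U)))"
    by (rule card_k_subsets_upper_tail[OF U I _ s]) simp
  also have "card (k_subsets U (card U - k)) = card (k_subsets U k)"
    using U k by (simp add: card_k_subsets binomial_symmetric[symmetric])
  finally show ?thesis .
qed

lemma k_subsets_nonempty: "finite U \<Longrightarrow> k \<le> card U \<Longrightarrow> k_subsets U k \<noteq> {}"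
  using card_k_subsets[of U k] by fastforce

lemma measure_pmf_of_set_le:
  assumes "finite S" "S \<noteq> {}" "real (card {x \<in> S. P x}) \<le> real (card S) * b"
  shows "measure_pmf.prob (pmf_of_set S) {x. P x} \<le> b"
  using assms by (simp add: measure_pmf_of_set Int_def divide_le_eq card_gt_0_iff mult.commute)

lemma prob_k_subsets_upper_tail:
  fixes s :: real
  assumes "finite U" "I \<subseteq> U" "k \<le> card U" "0 \<le> s"
  shows "measure_pmf.prob (pmf_of_set (k_subsets U k))
      {T. real (card I) * (real k / real (card U)) + s \<le> real (card (T \<inter> I))}
    \<le> exp (- s\<^sup>2 / (4 * real (card U)))"
  using assms by (intro measure_pmf_of_set_le card_k_subsets_upper_tail finite_k_subsets k_subsets_nonempty)

lemma prob_k_subsets_lower_tail: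
  fixes s :: real
  assumes "finite U" "I \<subseteq> U" "k \<le> card U" "0 \<le> s"
  shows "measure_pmf.prob (pmf_of_set (k_subsets U k))
      {T. real (card (T \<inter> I)) \<le> real (card I) * (real k / real (card U)) - s}
    \<le> exp (- s\<^sup>2 / (4 * real (card U)))"
  using assms by (intro measure_pmf_of_set_le card_k_subsets_lower_tail finite_k_subsets k_subsets_nonempty)

definition ones :: "bool list \<Rightarrow> nat set" where
  "ones xs = {i. i < length xs \<and> xs ! i}"

lemma card_ones_Int_lessThan:
  "m \<le> length xs \<Longrightarrow> card (ones xs \<inter> {..<m}) = length (filter (\<lambda>i. xs ! i) [0..<m])"
  unfolding length_filter_conv_card ones_def by (intro arg_cong[where f = card]) auto

lemma card_ones: "card (ones xs) = length (filter id xs)"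
  unfolding ones_def length_filter_conv_card by simp

lemma bij_betw_ones_strings: "bij_betw ones (strings A B) (k_subsets {..<A + B} A)"
proof (rule bij_betw_byWitness[where f' = "\<lambda>T. map (\<lambda>i. i \<in> T) [0..<A + B]"])
  show "\<forall>xs\<in>strings A B. map (\<lambda>i. i \<in> ones xs) [0..<A + B] = xs"
    by (auto simp: strings_def ones_def intro: nth_equalityI)
  have ones_map: "ones (map (\<lambda>i. i \<in> T) [0..<A + B]) = T" if "T \<subseteq> {..<A + B}" for T
    using that by (auto simp: ones_def)
  then show "\<forall>T\<in>k_subsets {..<A + B} A. ones (map (\<lambda>i. i \<in> T) [0..<A + B]) = T"
    by (simp add: k_subsets_def)
  show "ones ` strings A B \<subseteq> k_subsets {..<A + B} A"
    by (auto simp: strings_def k_subsets_def card_ones[symmetric] ones_def)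
  show "(\<lambda>T. map (\<lambda>i. i \<in> T) [0..<A + B]) ` k_subsets {..<A + B} A \<subseteq> strings A B"
    using ones_map by (auto simp: strings_def k_subsets_def card_ones[symmetric])
qed

lemma finite_strings: "finite (strings A B)"
  using bij_betw_finite[OF bij_betw_ones_strings] finite_k_subsets by blast

lemma strings_nonempty: "strings A B \<noteq> {}"
  using bij_betw_ones_strings[of A B] k_subsets_nonempty[of "{..<A + B}" A]
  by (auto simp: bij_betw_def)

lemma map_pmf_ones_strings:
  "map_pmf ones (pmf_of_set (strings A B)) = pmf_of_set (k_subsets {..<A + B} A)"
  by (rule map_pmf_of_set_bij_betw[OF bij_betw_ones_strings strings_nonempty finite_strings])

lemma prob_strings_le_prob_ones:
  assumes "\<And>X. X \<in> strings A B \<Longrightarrow> P X \<Longrightarrow> Q (ones X)"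
  shows "measure_pmf.prob (pmf_of_set (strings A B)) {X. P X}
    \<le> measure_pmf.prob (pmf_of_set (k_subsets {..<A + B} A)) {T. Q T}"
proof -
  have "measure_pmf.prob (pmf_of_set (strings A B)) {X. P X}
      \<le> measure_pmf.prob (pmf_of_set (strings A B)) (ones -` {T. Q T})"
    using assms by (intro measure_pmf.finite_measure_mono_AE)
      (auto simp: AE_measure_pmf_iff strings_nonempty finite_strings)
  then show ?thesis by (simp flip: map_pmf_ones_strings)
qed

lemma nth_filter_upt_less_iff:
  assumes K: "K < length (filter P [0..<n])" and m: "m \<le> n"
  shows "filter P [0..<n] ! K < m \<longleftrightarrow> K < length (filter P [0..<m])"
proof -
  have split: "[0..<n] = [0..<m] @ [m..<n]" using m upt_add_eq_append[of 0 m "n - m"] by simp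
  show ?thesis
  proof (cases "K < length (filter P [0..<m])")
    case True
    then have "filter P [0..<n] ! K = filter P [0..<m] ! K" by (simp add: split nth_append)
    moreover have "filter P [0..<m] ! K \<in> set (filter P [0..<m])" using True by (rule nth_mem)
    ultimately show ?thesis using True by auto
  next
    case False
    let ?j = "K - length (filter P [0..<m])"
    have "filter P [0..<n] ! K = filter P [m..<n] ! ?j" using False by (simp add: split nth_append)
    moreover have "?j < length (filter P [m..<n])" using K False by (simp add: split)
    then have "filter P [m..<n] ! ?j \<in> set (filter P [m..<n])" by (rule nth_mem)
    ultimately show ?thesis using False by auto
  qed
qed

lemma Mpos_le_iff:
  assumes xs: "xs \<in> strings A B" and AB: "B < A"
  shows "Mpos A B xs \<le> m \<longleftrightarrow> (A + B) div 2 < card (ones xs \<inter> {..<m})"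
proof -
  let ?ps = "filter (\<lambda>i. xs ! i) [0..<A + B]" and ?K = "(A + B) div 2"
  have len: "length xs = A + B" and ones: "card (ones xs) = A"
    using xs by (simp_all add: strings_def card_ones)
  have "ones xs \<inter> {..<A + B} = ones xs" using len by (auto simp: ones_def)
  then have K: "?K < length ?ps" using card_ones_Int_lessThan[of "A + B" xs] len ones AB by simp
  have M: "Mpos A B xs = Suc (?ps ! ?K)"
    using AB K len by (simp add: Mpos_def one_positions_def)
  show ?thesis
  proof (cases "m \<le> A + B")
    case True
    then show ?thesis
      using nth_filter_upt_less_iff[OF K True] M card_ones_Int_lessThan[of m xs] len
      by (simp add: Suc_le_eq)
  next
    case False
    have "?ps ! ?K < A + B" using nth_mem[OF K] by auto
    moreover have "ones xs \<inter> {..<m} = ones xs" using False len by (auto simp: ones_def)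
    ultimately show ?thesis using M False AB ones by simp
  qed
qed

lemma Mpos_le:
  assumes "xs \<in> strings A B"
  shows "Mpos A B xs \<le> A + B"
proof (cases "B < A")
  case True
  have "ones xs \<inter> {..<A + B} = ones xs" using assms by (auto simp: ones_def strings_def)
  then show ?thesis using assms True by (simp add: Mpos_le_iff card_ones strings_def)
qed (simp add: Mpos_def)

lemma expected_position_facts:
  fixes a n :: real
  assumes "0 < a" "a \<le> n" "n \<le> 2 * a"
  shows "1 / 2 \<le> a / n" "n\<^sup>2 / (2 * a) * (a / n) = n / 2" "n\<^sup>2 / (2 * a) \<le> n"
  using assms by (simp_all add: field_simps power2_eq_square)

lemma exp_neg_square_div_le:
  fixes n s t :: real
  assumes "0 \<le> n" "0 \<le> t" "t / 4 \<le> s"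
  shows "exp (- s\<^sup>2 / (4 * n)) \<le> exp (- t\<^sup>2 / (64 * n))"
proof -
  have "(t / 4)\<^sup>2 \<le> s\<^sup>2" using assms by (intro power_mono) auto
  then have "(t / 4)\<^sup>2 / (4 * n) \<le> s\<^sup>2 / (4 * n)" using assms by (intro divide_right_mono) auto
  then show ?thesis by (simp add: power_divide)
qed

lemma prob_Mpos_gt_nat:
  assumes AB: "B < A" and m: "m \<le> A + B" and s: "0 \<le> s"
    and few: "real ((A + B) div 2) \<le> real m * (real A / real (A + B)) - s"
  shows "measure_pmf.prob (pmf_of_set (strings A B)) {X. m < Mpos A B X}
    \<le> exp (- s\<^sup>2 / (4 * real (A + B)))"
proof -
  have "measure_pmf.prob (pmf_of_set (strings A B)) {X. m < Mpos A B X}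
      \<le> measure_pmf.prob (pmf_of_set (k_subsets {..<A + B} A))
          {T. real (card (T \<inter> {..<m})) \<le> real (card {..<m}) * (real A / real (card {..<A + B})) - s}"
  proof (rule prob_strings_le_prob_ones)
    fix X assume "X \<in> strings A B" "m < Mpos A B X"
    then have "card (ones X \<inter> {..<m}) \<le> (A + B) div 2" using Mpos_le_iff[OF _ AB, of X m] by simp
    then show "real (card (ones X \<inter> {..<m})) \<le> real (card {..<m}) * (real A / real (card {..<A + B})) - s"
      using few by simp
  qed
  also have "\<dots> \<le> exp (- s\<^sup>2 / (4 * real (card {..<A + B})))"
    using m s by (intro prob_k_subsets_lower_tail) auto
  finally show ?thesis by simp
qed

lemma prob_Mpos_le_nat:
  assumes AB: "B < A" and m: "m \<le> A + B" and s: "0 \<le> s"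
    and many: "real m * (real A / real (A + B)) + s < real ((A + B) div 2) + 1"
  shows "measure_pmf.prob (pmf_of_set (strings A B)) {X. Mpos A B X \<le> m}
    \<le> exp (- s\<^sup>2 / (4 * real (A + B)))"
proof -
  have "measure_pmf.prob (pmf_of_set (strings A B)) {X. Mpos A B X \<le> m}
      \<le> measure_pmf.prob (pmf_of_set (k_subsets {..<A + B} A))
          {T. real (card {..<m}) * (real A / real (card {..<A + B})) + s \<le> real (card (T \<inter> {..<m}))}"
  proof (rule prob_strings_le_prob_ones)
    fix X assume "X \<in> strings A B" "Mpos A B X \<le> m"
    then have "(A + B) div 2 < card (ones X \<inter> {..<m})" using Mpos_le_iff[OF _ AB, of X m] by simp
    then show "real (card {..<m}) * (real A / real (card {..<A + B})) + s \<le> real (card (ones X \<inter> {..<m}))"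
      using many by simp
  qed
  also have "\<dots> \<le> exp (- s\<^sup>2 / (4 * real (card {..<A + B})))"
    using m s by (intro prob_k_subsets_upper_tail) auto
  finally show ?thesis by simp
qed

lemma prob_Mpos_gt:
  assumes AB: "B < A" and t: "2 \<le> t"
  shows "measure_pmf.prob (pmf_of_set (strings A B))
      {X. (real (A + B))\<^sup>2 / (2 * real A) + t < real (Mpos A B X)}
    \<le> exp (- t\<^sup>2 / (64 * real (A + B)))"
proof -
  define N where "N = real (A + B)"
  define p where "p = real A / N"
  define m0 where "m0 = N\<^sup>2 / (2 * real A)"
  have p: "1 / 2 \<le> p" and m0p: "m0 * p = N / 2" and m0: "0 \<le> m0"
    using expected_position_facts[of "real A" N] AB by (simp_all add: p_def m0_def N_def)
  show ?thesis
  proof (cases "N \<le> m0 + t")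
    case True
    have "measure_pmf.prob (pmf_of_set (strings A B)) {X. m0 + t < real (Mpos A B X)}
        \<le> measure_pmf.prob (pmf_of_set (k_subsets {..<A + B} A)) {T. False}"
      by (rule prob_strings_le_prob_ones) (use True Mpos_le in \<open>fastforce simp: N_def\<close>)
    then show ?thesis by (simp add: m0_def N_def) (meson exp_ge_zero order_trans)
  next
    case False
    define m where "m = nat \<lfloor>m0 + t\<rfloor>"
    define s where "s = (t - 1) / 2"
    have m: "m0 + t - 1 < real m" "real m \<le> m0 + t"
      using m0 t by (simp_all add: m_def)
    have "N / 2 + s \<le> real m * p"
    proof -
      have "(m0 + t - 1) * p \<le> real m * p" using m p by (intro mult_right_mono) auto
      moreover have "(t - 1) * (1 / 2) \<le> (t - 1) * p" using p t by (intro mult_left_mono) auto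
      ultimately show ?thesis using m0p by (simp add: s_def algebra_simps)
    qed
    moreover have "real ((A + B) div 2) \<le> N / 2"
      using of_nat_div_le_of_nat[where 'a = real, of "A + B" 2] by (simp add: N_def)
    moreover have "real m * (real A / real (A + B)) = real m * p" by (simp add: p_def N_def)
    ultimately have few: "real ((A + B) div 2) \<le> real m * (real A / real (A + B)) - s"
      by linarith
    have "measure_pmf.prob (pmf_of_set (strings A B)) {X. m0 + t < real (Mpos A B X)}
        \<le> measure_pmf.prob (pmf_of_set (strings A B)) {X. m < Mpos A B X}"
      using m(2) by (intro measure_pmf.finite_measure_mono) (auto simp flip: of_nat_less_iff)
    also have "\<dots> \<le> exp (- s\<^sup>2 / (4 * real (A + B)))"
      using m False t by (intro prob_Mpos_gt_nat[OF AB _ _ few]) (auto simp: s_def N_def)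
    also have "\<dots> \<le> exp (- t\<^sup>2 / (64 * real (A + B)))"
      using t by (intro exp_neg_square_div_le) (auto simp: s_def)
    finally show ?thesis by (simp add: m0_def N_def)
  qed
qed

lemma prob_Mpos_lt:
  assumes AB: "B < A" and t: "0 \<le> t"
  shows "measure_pmf.prob (pmf_of_set (strings A B))
      {X. real (Mpos A B X) < (real (A + B))\<^sup>2 / (2 * real A) - t}
    \<le> exp (- t\<^sup>2 / (64 * real (A + B)))"
proof -
  define N where "N = real (A + B)"
  define p where "p = real A / N"
  define m0 where "m0 = N\<^sup>2 / (2 * real A)"
  have p: "1 / 2 \<le> p" and m0p: "m0 * p = N / 2" and m0N: "m0 \<le> N"
    using expected_position_facts[of "real A" N] AB by (simp_all add: p_def m0_def N_def)
  show ?thesis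
  proof (cases "m0 - t \<le> 0")
    case True
    have "measure_pmf.prob (pmf_of_set (strings A B)) {X. real (Mpos A B X) < m0 - t}
        \<le> measure_pmf.prob (pmf_of_set (k_subsets {..<A + B} A)) {T. False}"
      by (rule prob_strings_le_prob_ones) (use True in simp)
    then show ?thesis by (simp add: m0_def N_def) (meson exp_ge_zero order_trans)
  next
    case False
    define m where "m = nat \<lceil>m0 - t\<rceil> - 1"
    define s where "s = t / 2"
    have m: "real m < m0 - t"
      using False ceiling_correct[of "m0 - t"] by (simp add: m_def of_nat_diff)
    have "real m * p + s \<le> N / 2"
    proof -
      have "real m * p \<le> (m0 - t) * p" using m p by (intro mult_right_mono) auto
      moreover have "t * (1 / 2) \<le> t * p" using p t by (intro mult_left_mono) auto
      ultimately show ?thesis using m0p by (simp add: s_def algebra_simps)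
    qed
    moreover have "N / 2 < real ((A + B) div 2) + 1" by (simp add: N_def)
    moreover have "real m * (real A / real (A + B)) = real m * p" by (simp add: p_def N_def)
    ultimately have many: "real m * (real A / real (A + B)) + s < real ((A + B) div 2) + 1"
      by linarith
    have "{X. real (Mpos A B X) < m0 - t} \<subseteq> {X. Mpos A B X \<le> m}"
    proof safe
      fix X assume "real (Mpos A B X) < m0 - t"
      then have "int (Mpos A B X) < \<lceil>m0 - t\<rceil>" by (simp add: less_ceiling_iff)
      then show "Mpos A B X \<le> m" by (simp add: m_def)
    qed
    then have "measure_pmf.prob (pmf_of_set (strings A B)) {X. real (Mpos A B X) < m0 - t}
        \<le> measure_pmf.prob (pmf_of_set (strings A B)) {X. Mpos A B X \<le> m}"
      by (intro measure_pmf.finite_measure_mono) auto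
    also have "\<dots> \<le> exp (- s\<^sup>2 / (4 * real (A + B)))"
      using m m0N t by (intro prob_Mpos_le_nat[OF AB _ _ many]) (auto simp: s_def N_def)
    also have "\<dots> \<le> exp (- t\<^sup>2 / (64 * real (A + B)))"
      using t by (intro exp_neg_square_div_le) (auto simp: s_def)
    finally show ?thesis by (simp add: m0_def N_def)
  qed
qed

lemma two_exp_le_powr:
  fixes r :: real
  assumes "1 \<le> r"
  shows "2 * exp (- (4 * r)) \<le> 2 powr (- r)"
proof -
  have "ln 2 * (1 + r) \<le> 1 * (1 + r)"
    using ln_2_less_1 assms by (intro mult_right_mono) auto
  then have "ln 2 - 4 * r \<le> - r * ln 2" using assms by (simp add: algebra_simps)
  then have "exp (ln 2 - 4 * r) \<le> exp (- r * ln 2)" by simp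
  moreover have "exp (ln 2 - 4 * r) = 2 * exp (- (4 * r))" by (simp add: exp_diff exp_minus divide_inverse)
  ultimately show ?thesis by (simp add: powr_def)
qed

lemma prob_Mpos_deviation:
  assumes AB: "B < A" and t: "2 \<le> t"
  shows "measure_pmf.prob (pmf_of_set (strings A B))
      {X. \<bar>real (Mpos A B X) - (real (A + B))\<^sup>2 / (2 * real A)\<bar> > t}
    \<le> 2 * exp (- t\<^sup>2 / (64 * real (A + B)))"
proof -
  let ?P = "pmf_of_set (strings A B)" and ?m0 = "(real (A + B))\<^sup>2 / (2 * real A)"
  have "measure_pmf.prob ?P {X. \<bar>real (Mpos A B X) - ?m0\<bar> > t}
      \<le> measure_pmf.prob ?P ({X. ?m0 + t < real (Mpos A B X)} \<union> {X. real (Mpos A B X) < ?m0 - t})"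
    by (intro measure_pmf.finite_measure_mono) auto
  also have "\<dots> \<le> measure_pmf.prob ?P {X. ?m0 + t < real (Mpos A B X)}
      + measure_pmf.prob ?P {X. real (Mpos A B X) < ?m0 - t}"
    by (rule measure_Un_le) simp_all
  also have "\<dots> \<le> 2 * exp (- t\<^sup>2 / (64 * real (A + B)))"
    using prob_Mpos_gt[OF AB t] prob_Mpos_lt[OF AB, of t] t by linarith
  finally show ?thesis .
qed

theorem mainTheorem9:
  shows "\<exists>d::real. \<forall>(A::nat) (B::nat) (r::real).
    B \<le> A \<longrightarrow> 0 < A + B \<longrightarrow> 1 \<le> r \<longrightarrow>
    measure_pmf.prob (pmf_of_set (strings A B))
      {X. \<bar>real (Mpos A B X) - (real (A + B))\<^sup>2 / (2 * real A)\<bar> > d * sqrt (r * real (A + B))}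
    \<le> 2 powr (- r)"
proof (intro exI[of _ 16] allI impI)
  fix A B :: nat and r :: real
  assume BA: "B \<le> A" and N: "0 < A + B" and r: "1 \<le> r"
  define n where "n = real (A + B)"
  have "1 \<le> A + B" using N by linarith
  then have "1 \<le> n" unfolding n_def by (metis of_nat_1 of_nat_le_iff)
  then have rn: "1 \<le> r * n" using mult_mono[of 1 r 1 n] r by simp
  show "measure_pmf.prob (pmf_of_set (strings A B))
      {X. \<bar>real (Mpos A B X) - (real (A + B))\<^sup>2 / (2 * real A)\<bar> > 16 * sqrt (r * real (A + B))}
    \<le> 2 powr (- r)"
  proof (cases "A = B")
    case True
    then have "(real (A + B))\<^sup>2 / (2 * real A) = real (Mpos A B X)" for X
      using N by (simp add: Mpos_def power2_eq_square)
    then show ?thesis using rn by (simp add: n_def)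
  next
    case False
    have "1 \<le> sqrt (r * n)" using rn by simp
    then have t: "2 \<le> 16 * sqrt (r * n)" by linarith
    have "(16 * sqrt (r * n))\<^sup>2 / (64 * n) = 4 * r"
      using rn \<open>1 \<le> n\<close> by (simp add: power_mult_distrib)
    then show ?thesis
      using prob_Mpos_deviation[of B A, OF _ t[unfolded n_def]] False BA two_exp_le_powr[OF r]
      by (simp add: n_def)
  qed
qed

end
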